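(* For any metric space $X$, $\operatorname{tHD}(X)=0$ if and only if there is no Lipschitz map from $X$ onto a non-degenerate closed interval of $\mathbb{R}$.
   Context: For a metric space $X$, the transfinite Hausdorff dimension is $\operatorname{tHD}(X)=\sup\{\operatorname{trind} f(Y): Y\subset X,\ f:Y\to Z \text{ Lipschitz},\ Z \text{ a metric space}\}$, where $\operatorname{trind}$ denotes the transfinite small inductive (topological) dimension. *)

theory Defs
  imports "HOL-Analysis.Analysis"
begin

text \<open>Finite levels of the (transfinite) small inductive dimension.
  ind_le_shift T k means trind T \<le> k - 1, i.e. ind_le_shift T 0 means trind T = -1
  (the space is empty), and trind T \<le> k holds iff every point has arbitrarily small
  open neighbourhoods whose boundary has trind \<le> k - 1.  On finite ordinals
  the transfinite small inductive dimension coincides with this recursion.\<close>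
fun ind_le_shift :: "'a topology \<Rightarrow> nat \<Rightarrow> bool" where
  "ind_le_shift T 0 \<longleftrightarrow> topspace T = {}"
| "ind_le_shift T (Suc k) \<longleftrightarrow>
     (\<forall>x \<in> topspace T. \<forall>U. openin T U \<and> x \<in> U \<longrightarrow>
        (\<exists>V. openin T V \<and> x \<in> V \<and> V \<subseteq> U \<and>
             ind_le_shift (subtopology T (T frontier_of V)) k))"

definition trind_le_zero :: "'a topology \<Rightarrow> bool" where
  "trind_le_zero T \<longleftrightarrow> ind_le_shift T 1"

definition trind_eq_zero :: "'a topology \<Rightarrow> bool" where
  "trind_eq_zero T \<longleftrightarrow> trind_le_zero T \<and> \<not> ind_le_shift T 0"

text \<open>tHD(X) = 0: the supremum of trind f(Y), over Y \<subseteq> X and Lipschitz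
  f : Y \<rightarrow> Z into a metric space Z, equals 0; i.e. every such value is \<le> 0
  and the value 0 is attained.  Since |f(Y)| \<le> |X|, every such image is
  isometric to a metric space whose carrier lies in the same type as X, so
  quantifying over metrics Z :: 'a metric loses no generality.\<close>
definition tHD_eq_zero :: "'a metric \<Rightarrow> bool" where
  "tHD_eq_zero X \<longleftrightarrow>
     (\<forall>Y (Z :: 'a metric) (f :: 'a \<Rightarrow> 'a). Y \<subseteq> mspace X \<and> Lipschitz_continuous_map (submetric X Y) Z f \<longrightarrow>
        trind_le_zero (subtopology (mtopology_of Z) (f ` Y)))
   \<and> (\<exists>Y (Z :: 'a metric) (f :: 'a \<Rightarrow> 'a). Y \<subseteq> mspace X \<and> Lipschitz_continuous_map (submetric X Y) Z f \<and>
        trind_eq_zero (subtopology (mtopology_of Z) (f ` Y)))"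

end

theory Submission
  imports Defs
begin

(*
  Topology.  trind T \<le> 0 means that every point has a neighbourhood base of clopen
  sets.  Hence a connected space with trind \<le> 0 has no proper nonempty open subset,
  so a connected metric space with trind \<le> 0 has at most one point; and every
  singleton has trind = 0.

  A Lipschitz surjection f : X \<rightarrow> [a,b] composed with a section of f
  gives a Lipschitz map of X onto a copy of [a,b] (inside the carrier type of X,
  with the metric of [a,b]); this copy is connected with two points, so its trind is
  not \<le> 0.

  By McShane's extension theorem, a Lipschitz real function on
  Y \<subseteq> X whose image contains [a,b] extends and truncates to a Lipschitz map of X
  onto [a,b].  So, when there is no such map, for every Lipschitz g on Y and every
  y0 \<in> Y the distances d(g y0, g y) omit some value in every interval [r/2,r]; the
  balls of those radii are clopen in g(Y), giving trind g(Y) \<le> 0.  Singletons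
  witness that the supremum 0 is attained.
*)

text \<open>trind T \<le> 0 means: arbitrarily small clopen neighbourhoods, since a set has
  empty frontier exactly when it is clopen.\<close>

lemma trind_le_zero_iff_clopen_base:
  "trind_le_zero T \<longleftrightarrow>
     (\<forall>x \<in> topspace T. \<forall>U. openin T U \<and> x \<in> U \<longrightarrow>
        (\<exists>V. openin T V \<and> closedin T V \<and> x \<in> V \<and> V \<subseteq> U))"
proof -
  have "(openin T V \<and> x \<in> V \<and> V \<subseteq> U \<and> ind_le_shift (subtopology T (T frontier_of V)) 0)
    \<longleftrightarrow> (openin T V \<and> closedin T V \<and> x \<in> V \<and> V \<subseteq> U)" for V x U
    using frontier_of_subset_topspace[of T V] frontier_of_eq_empty[of V T]
    by (auto simp: openin_subset Int_absorb1)
  then show ?thesis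
    unfolding trind_le_zero_def One_nat_def ind_le_shift.simps(2) by presburger
qed

text \<open>In a connected space with trind \<le> 0, any nonempty open set contains a nonempty
  clopen set and is therefore everything.\<close>

lemma connected_trind_le_zero_open_eq:
  assumes "connected_space T" "trind_le_zero T" "openin T U" "U \<noteq> {}"
  shows "U = topspace T"
proof -
  obtain x where "x \<in> U" using assms(4) by blast
  moreover have "x \<in> topspace T" using calculation assms(3) openin_subset by blast
  ultimately obtain V where V: "openin T V" "closedin T V" "x \<in> V" "V \<subseteq> U"
    using assms(2,3) unfolding trind_le_zero_iff_clopen_base by blast
  then have "V = topspace T"
    using assms(1) unfolding connected_space_clopen_in by blast
  then show ?thesis using V(4) assms(3) openin_subset by blast
qed

text \<open>A connected metric space with trind \<le> 0 has at most one point: the open ball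
  around u of radius d(u,v) would otherwise be a proper nonempty open set.\<close>

lemma connected_trind_le_zero_metric_subsingleton:
  assumes "connected_space (mtopology_of Z)" "trind_le_zero (mtopology_of Z)"
    and u: "u \<in> mspace Z" and v: "v \<in> mspace Z"
  shows "u = v"
proof (rule ccontr)
  assume "u \<noteq> v"
  then have pos: "0 < mdist Z u v"
    using u v by (metis less_eq_real_def mdist_nonneg mdist_zero)
  let ?U = "mball_of Z u (mdist Z u v)"
  have U_open: "openin (mtopology_of Z) ?U"
    by (simp add: mball_of_def mtopology_of_def Metric_space.openin_mball)
  have "mdist Z u u = 0" using u by simp
  then have "u \<in> ?U" using u pos by (simp del: mdist_zero)
  then have "?U = topspace (mtopology_of Z)"
    using connected_trind_le_zero_open_eq[OF assms(1,2) U_open] by blast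
  then have "v \<in> ?U" using v by simp
  then show False by simp
qed

text \<open>Every singleton subspace has trind = 0; it is the witness that tHD attains 0.\<close>

lemma trind_eq_zero_singleton:
  assumes "x \<in> topspace T"
  shows "trind_eq_zero (subtopology T {x})"
proof -
  have top: "topspace (subtopology T {x}) = {x}" using assms by simp
  have "closedin (subtopology T {x}) U" if "openin (subtopology T {x}) U" "x \<in> U" for U
  proof -
    have "U = {x}" using openin_subset[OF that(1)] that(2) top by blast
    then show ?thesis using closedin_topspace top by metis
  qed
  then have "trind_le_zero (subtopology T {x})"
    unfolding trind_le_zero_iff_clopen_base top by blast
  then show ?thesis unfolding trind_eq_zero_def using top by simp
qed

definition maps_Lipschitz_onto_interval :: "'a metric \<Rightarrow> bool" where
  "maps_Lipschitz_onto_interval X \<longleftrightarrow>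
     (\<exists>(f :: 'a \<Rightarrow> real) a b. a < b \<and>
        Lipschitz_continuous_map X euclidean_metric f \<and> f ` mspace X = {a..b})"

text \<open>Any set I of reals covered by f(S) has an isometric copy inside S, for the metric
  pulled back along f; this is how subsets of the real line are realised as metric
  spaces on the carrier type of X, as the definition of tHD requires.\<close>

lemma real_image_copy:
  fixes f :: "'a \<Rightarrow> real"
  assumes "I \<subseteq> f ` S"
  obtains Z :: "'a metric" and g :: "real \<Rightarrow> 'a"
  where "mspace Z = g ` I" "g ` I \<subseteq> S" "\<And>t. t \<in> I \<Longrightarrow> f (g t) = t"
    "\<And>u v. u \<in> mspace Z \<Longrightarrow> v \<in> mspace Z \<Longrightarrow> mdist Z u v = dist (f u) (f v)"
proof -
  define g where "g = inv_into S f"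
  have fg: "f (g t) = t" and gS: "g t \<in> S" if "t \<in> I" for t
    using that assms by (auto simp: g_def f_inv_into_f inv_into_into)
  have "Metric_space (g ` I) (\<lambda>u v. dist (f u) (f v))"
    by (auto simp: Metric_space_def dist_commute fg dist_triangle)
  then show ?thesis
    using fg gS
    by (intro that[of "metric (g ` I, \<lambda>u v. dist (f u) (f v))" g])
       (auto simp: Metric_space.mspace_metric Metric_space.mdist_metric)
qed

text \<open>Necessity: a Lipschitz map onto [a,b] yields a Lipschitz image of X that is a
  connected two-point-containing copy of [a,b], whose trind is not \<le> 0.\<close>

lemma Lipschitz_onto_interval_imp_not_tHD_eq_zero:
  assumes "maps_Lipschitz_onto_interval X"
  shows "\<not> tHD_eq_zero X"
proof
  assume tHD: "tHD_eq_zero X"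
  obtain f :: "'a \<Rightarrow> real" and a b where ab: "a < b"
    and f: "Lipschitz_continuous_map X euclidean_metric f" and im: "f ` mspace X = {a..b}"
    using assms unfolding maps_Lipschitz_onto_interval_def by blast
  obtain Z :: "'a metric" and g where Z: "mspace Z = g ` {a..b}"
    and fg: "\<And>t. t \<in> {a..b} \<Longrightarrow> f (g t) = t"
    and dZ: "\<And>u v. u \<in> mspace Z \<Longrightarrow> v \<in> mspace Z \<Longrightarrow> mdist Z u v = dist (f u) (f v)"
    by (rule real_image_copy[of "{a..b}" f "mspace X"]) (use im in auto)
  have iso: "mdist Z (g s) (g t) = dist s t" if "s \<in> {a..b}" "t \<in> {a..b}" for s t
    using that by (simp add: Z dZ fg)
  have "Lipschitz_continuous_map (submetric euclidean_metric {a..b}) Z g"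
    unfolding Lipschitz_continuous_map_def using iso by (auto simp: Z intro!: exI[of _ 1])
  then have "connectedin (mtopology_of Z) (g ` {a..b})"
    by (rule connectedin_continuous_map_image[OF Lipschitz_continuous_imp_continuous_map])
       (simp add: mtopology_of_submetric)
  then have connected: "connected_space (mtopology_of Z)"
    by (metis Z connectedin_topspace topspace_mtopology_of)
  obtain B where B: "\<forall>x\<in>mspace X. \<forall>y\<in>mspace X. dist (f x) (f y) \<le> B * mdist X x y"
    using f unfolding Lipschitz_continuous_map_def by auto
  have fX: "f x \<in> {a..b}" if "x \<in> mspace X" for x using that im by blast
  have "Lipschitz_continuous_map (submetric X (mspace X)) Z (g \<circ> f)"
    unfolding Lipschitz_continuous_map_def using fX B iso by (auto simp: Z intro!: exI[of _ B])
  then have "trind_le_zero (subtopology (mtopology_of Z) ((g \<circ> f) ` mspace X))"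
    using tHD unfolding tHD_eq_zero_def by blast
  moreover have "(g \<circ> f) ` mspace X = topspace (mtopology_of Z)"
    by (metis Z im image_comp topspace_mtopology_of)
  ultimately have trind: "trind_le_zero (mtopology_of Z)"
    by (metis subtopology_topspace)
  have "g a = g b"
    using connected_trind_le_zero_metric_subsingleton[OF connected trind] ab by (simp add: Z)
  then show False
    using fg[of a] fg[of b] ab by simp
qed

text \<open>The Lipschitz condition is stated one-sidedly;
  it is symmetric since it is required for all pairs.\<close>

lemma McShane_extension:
  fixes \<phi> :: "'a \<Rightarrow> real"
  assumes Y: "Y \<subseteq> mspace X" "Y \<noteq> {}" and B: "B \<ge> 0"
    and \<phi>: "\<And>x y. x \<in> Y \<Longrightarrow> y \<in> Y \<Longrightarrow> \<phi> x \<le> \<phi> y + B * mdist X x y"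
  obtains \<psi> where "\<And>p q. p \<in> mspace X \<Longrightarrow> q \<in> mspace X \<Longrightarrow> \<psi> p \<le> \<psi> q + B * mdist X p q"
    and "\<And>y. y \<in> Y \<Longrightarrow> \<psi> y = \<phi> y"
proof
  define \<psi> where "\<psi> p = Inf ((\<lambda>y. \<phi> y + B * mdist X p y) ` Y)" for p
  obtain y0 where y0: "y0 \<in> Y" using Y(2) by blast
  have ne: "(\<lambda>y. \<phi> y + B * mdist X p y) ` Y \<noteq> {}" for p
    using Y(2) by blast
  have bdd: "bdd_below ((\<lambda>y. \<phi> y + B * mdist X p y) ` Y)" if "p \<in> mspace X" for p
  proof (rule bdd_belowI2)
    fix y assume y: "y \<in> Y"
    have "mdist X y0 y \<le> mdist X y0 p + mdist X p y"
      using that y y0 Y(1) by (intro mdist_triangle) auto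
    then have "B * mdist X y0 y \<le> B * mdist X y0 p + B * mdist X p y"
      using B by (metis distrib_left mult_left_mono)
    then show "\<phi> y0 - B * mdist X y0 p \<le> \<phi> y + B * mdist X p y"
      using \<phi>[OF y0 y] by linarith
  qed
  have lower: "\<psi> p \<le> \<phi> y + B * mdist X p y" if "p \<in> mspace X" "y \<in> Y" for p y
    unfolding \<psi>_def using that bdd by (intro cInf_lower) auto
  show "\<psi> p \<le> \<psi> q + B * mdist X p q" if pq: "p \<in> mspace X" "q \<in> mspace X" for p q
  proof -
    have "\<psi> p - B * mdist X p q \<le> \<psi> q"
      unfolding \<psi>_def[of q]
    proof (rule cInf_greatest[OF ne], clarify)
      fix y assume y: "y \<in> Y"
      have "mdist X p y \<le> mdist X p q + mdist X q y"
        using pq y Y(1) by (intro mdist_triangle) auto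
      then have "B * mdist X p y \<le> B * mdist X p q + B * mdist X q y"
        using B by (metis distrib_left mult_left_mono)
      then show "\<psi> p - B * mdist X p q \<le> \<phi> y + B * mdist X q y"
        using lower[OF pq(1) y] by linarith
    qed
    then show ?thesis by linarith
  qed
  show "\<psi> y = \<phi> y" if y: "y \<in> Y" for y
  proof (rule antisym)
    have "mdist X y y = 0" using y Y(1) by auto
    then show "\<psi> y \<le> \<phi> y"
      using lower[of y y] y Y(1) by auto
    show "\<phi> y \<le> \<psi> y"
      unfolding \<psi>_def
    proof (rule cInf_greatest[OF ne], clarify)
      fix y' assume "y' \<in> Y"
      then show "\<phi> y \<le> \<phi> y' + B * mdist X y y'" by (rule \<phi>[OF y])
    qed
  qed
qed

text \<open>If a Lipschitz real function on a subset Y of X has [a,b] in its image, then X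
  maps Lipschitz onto [a,b]: extend it to X and truncate to [a,b].\<close>

lemma interval_in_Lipschitz_image_imp_onto:
  fixes \<phi> :: "'a \<Rightarrow> real"
  assumes Y: "Y \<subseteq> mspace X"
    and \<phi>: "Lipschitz_continuous_map (submetric X Y) euclidean_metric \<phi>"
    and ab: "a < b" "{a..b} \<subseteq> \<phi> ` Y"
  shows "maps_Lipschitz_onto_interval X"
proof -
  obtain B where B: "B > 0" "\<And>x y. x \<in> Y \<Longrightarrow> y \<in> Y \<Longrightarrow> dist (\<phi> x) (\<phi> y) \<le> B * mdist X x y"
    using \<phi> Y unfolding Lipschitz_continuous_map_pos by (auto simp: Int_absorb2)
  have "Y \<noteq> {}" using ab by auto
  moreover have "\<phi> x \<le> \<phi> y + B * mdist X x y" if "x \<in> Y" "y \<in> Y" for x y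
    using B(2)[OF that] by (simp add: dist_real_def abs_le_iff)
  ultimately obtain \<psi> where
    \<psi>: "\<And>p q. p \<in> mspace X \<Longrightarrow> q \<in> mspace X \<Longrightarrow> \<psi> p \<le> \<psi> q + B * mdist X p q"
    and ext: "\<And>y. y \<in> Y \<Longrightarrow> \<psi> y = \<phi> y"
    using McShane_extension[OF Y _ less_imp_le[OF B(1)]] by metis
  define F where "F p = max a (min b (\<psi> p))" for p
  have "Lipschitz_continuous_map X euclidean_metric F"
    unfolding Lipschitz_continuous_map_def
  proof (intro conjI exI[of _ B] ballI)
    fix p q assume pq: "p \<in> mspace X" "q \<in> mspace X"
    then show "mdist euclidean_metric (F p) (F q) \<le> B * mdist X p q"
      using \<psi>[OF pq] \<psi>[OF pq(2,1)] by (auto simp: F_def dist_real_def mdist_commute)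
  qed simp
  moreover have "F ` mspace X = {a..b}"
  proof
    show "F ` mspace X \<subseteq> {a..b}" using ab by (auto simp: F_def)
    show "{a..b} \<subseteq> F ` mspace X"
    proof
      fix t assume t: "t \<in> {a..b}"
      then obtain y where "y \<in> Y" "\<phi> y = t" using ab by blast
      then show "t \<in> F ` mspace X"
        using t ext Y by (intro image_eqI[of _ _ y]) (auto simp: F_def)
    qed
  qed
  ultimately show ?thesis
    using ab unfolding maps_Lipschitz_onto_interval_def by blast
qed

text \<open>An open ball whose sphere misses S is clopen relative to S, because within S it
  coincides with the closed ball.\<close>

lemma ball_clopen_in_subspace:
  assumes "S \<subseteq> mspace Z" "\<And>y. y \<in> S \<Longrightarrow> mdist Z x y \<noteq> r"
  shows "openin (subtopology (mtopology_of Z) S) (mball_of Z x r \<inter> S)"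
    and "closedin (subtopology (mtopology_of Z) S) (mball_of Z x r \<inter> S)"
proof -
  have "mball_of Z x r \<inter> S = mcball_of Z x r \<inter> S"
    using assms by (auto simp: less_le)
  moreover have "openin (mtopology_of Z) (mball_of Z x r)"
    by (simp add: mball_of_def mtopology_of_def Metric_space.openin_mball)
  moreover have "closedin (mtopology_of Z) (mcball_of Z x r)"
    by (simp add: mcball_of_def mtopology_of_def Metric_space.closedin_mcball)
  ultimately show "openin (subtopology (mtopology_of Z) S) (mball_of Z x r \<inter> S)"
    and "closedin (subtopology (mtopology_of Z) S) (mball_of Z x r \<inter> S)"
    by (metis openin_subtopology_Int, metis closedin_subtopology_Int_closed inf_commute)
qed

text \<open>Sufficiency, main step: if X maps Lipschitz onto no interval, every Lipschitz
  image g(Y) of a subset has trind \<le> 0.  Around g y0 the distances to points of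
  g(Y) omit some radius s in [r/2,r], and the s-ball is a small clopen neighbourhood.\<close>

lemma no_Lipschitz_onto_interval_imp_trind_le_zero:
  assumes noonto: "\<not> maps_Lipschitz_onto_interval X" and Y: "Y \<subseteq> mspace X"
    and g: "Lipschitz_continuous_map (submetric X Y) Z g"
  shows "trind_le_zero (subtopology (mtopology_of Z) (g ` Y))"
  unfolding trind_le_zero_iff_clopen_base
proof (intro ballI allI impI, elim conjE)
  let ?T = "subtopology (mtopology_of Z) (g ` Y)"
  have gY: "g ` Y \<subseteq> mspace Z"
    using g Y unfolding Lipschitz_continuous_map_def by auto
  fix x U assume x: "x \<in> topspace ?T" and U: "openin ?T U" "x \<in> U"
  have xZ: "x \<in> mspace Z" using x gY by auto
  obtain W where W: "openin (mtopology_of Z) W" "U = W \<inter> g ` Y"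
    using U(1) by (auto simp: openin_subtopology)
  obtain r where r: "r > 0" "mball_of Z x r \<subseteq> W"
    using W U(2) unfolding mtopology_of_def mball_of_def
      Metric_space.openin_mtopology[OF Metric_space_mspace_mdist] by blast
  have dist_Lipschitz: "Lipschitz_continuous_map (submetric X Y) euclidean_metric (\<lambda>y. mdist Z x (g y))"
    using xZ by (intro Lipschitz_continuous_map_mdist g) (simp add: Lipschitz_continuous_map_const)
  have "r / 2 < r" using r(1) by simp
  then have "\<not> {r/2..r} \<subseteq> (\<lambda>y. mdist Z x (g y)) ` Y"
    using interval_in_Lipschitz_image_imp_onto[OF Y dist_Lipschitz] noonto by blast
  then obtain s where s: "s \<in> {r/2..r}" "s \<notin> (\<lambda>y. mdist Z x (g y)) ` Y"
    by (meson subsetI)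
  then have sphere: "mdist Z x z \<noteq> s" if "z \<in> g ` Y" for z
    using that by blast
  define V where "V = mball_of Z x s \<inter> g ` Y"
  have "openin ?T V" "closedin ?T V"
    unfolding V_def using ball_clopen_in_subspace[OF gY sphere] by simp_all
  moreover have "x \<in> V"
  proof -
    have "mdist Z x x = 0" using xZ by simp
    then have "x \<in> mball_of Z x s" using xZ s(1) r(1) by (simp del: mdist_zero)
    then show ?thesis using U(2) W(2) by (simp add: V_def)
  qed
  moreover have "V \<subseteq> U"
    using W r(2) s(1) by (auto simp: V_def)
  ultimately show "\<exists>V. openin ?T V \<and> closedin ?T V \<and> x \<in> V \<and> V \<subseteq> U"
    by (intro exI[of _ V] conjI)
qed

lemma no_Lipschitz_onto_interval_imp_tHD_eq_zero:
  assumes "\<not> maps_Lipschitz_onto_interval X" "mspace X \<noteq> {}"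
  shows "tHD_eq_zero X"
  unfolding tHD_eq_zero_def
proof (intro conjI allI impI; (elim conjE)?)
  show "trind_le_zero (subtopology (mtopology_of Z) (f ` Y))"
    if "Y \<subseteq> mspace X" "Lipschitz_continuous_map (submetric X Y) Z f"
    for Y and Z :: "'a metric" and f :: "'a \<Rightarrow> 'a"
    using no_Lipschitz_onto_interval_imp_trind_le_zero[OF assms(1) that] .
  obtain x0 where x0: "x0 \<in> mspace X" using assms(2) by blast
  have "Lipschitz_continuous_map (submetric X {x0}) X (\<lambda>x. x)"
    by (rule Lipschitz_continuous_map_from_submetric[OF Lipschitz_continuous_map_id])
  moreover have "trind_eq_zero (subtopology (mtopology_of X) ((\<lambda>x. x) ` {x0}))"
    using trind_eq_zero_singleton[of x0 "mtopology_of X"] x0 by simp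
  ultimately show "\<exists>Y (Z :: 'a metric) (f :: 'a \<Rightarrow> 'a). Y \<subseteq> mspace X \<and>
      Lipschitz_continuous_map (submetric X Y) Z f \<and> trind_eq_zero (subtopology (mtopology_of Z) (f ` Y))"
    using x0 by blast
qed

theorem lemma4p6:
  fixes X :: "'a metric"
  assumes "mspace X \<noteq> {}"
  shows "tHD_eq_zero X \<longleftrightarrow>
    \<not> (\<exists>(f :: 'a \<Rightarrow> real) a b. a < b \<and>
          Lipschitz_continuous_map X euclidean_metric f \<and> f ` mspace X = {a..b})"
  unfolding maps_Lipschitz_onto_interval_def[symmetric]
  using Lipschitz_onto_interval_imp_not_tHD_eq_zero no_Lipschitz_onto_interval_imp_tHD_eq_zero assms
  by blast

end
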